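(* Let $\gamma_1,\gamma_2>0$ and let $q\mapsto A_q$ be the weak attractor of the birth-death chain RDS $(\theta,\varphi)$ described in the context. Then $\mathbb{P}(\#A_q=2)=1$, and $A_q\cap W_i\neq\emptyset$ for $i=0,1$, $\mathbb{P}$-a.s., where $W_0=\{0,2,4,\dots\}$ and $W_1=\{1,3,5,\dots\}$.
   Context: Noise space $\mathcal{Q}=\{q=(q_n)_{n\in\mathbb{Z}}: q_n\in[0,1]\}$ with product Borel $\sigma$-algebra and $\mathbb{P}=\lambda^{\mathbb{Z}}$ ($\lambda$ Lebesgue on $[0,1]$), invertible shift $(\theta q)_n=q_{n+1}$. For $q\in\mathcal{Q}$, $f_q(x)=x+1$ if $q_0<\frac{\gamma_1}{\gamma_1+\gamma_2x}$ and $f_q(x)=x-1$ otherwise; $\varphi^0_q=\mathrm{id}$, $\varphi^n_q=f_{\theta^{n-1}q}\circ\cdots\circ f_q$. With $d(x,B)=\inf_{y\in B}|x-y|$ and $\mathrm{dist}(A,B)=\sup_{x\in A}d(x,B)$, a weak attractor is a map $A:\mathcal{Q}\to\mathcal{P}(\mathbb{N}_0)$ with $q\mapsto d(x,A_q)$ measurable for each $x$, $A_q$ nonempty and finite for all $q$, $\varphi^n_q(A_q)=A_{\theta^nq}$ for all $n\in\mathbb{N}$ $\mathbb{P}$-a.s., and $\mathrm{dist}(\varphi^n_q(B),A_{\theta^nq})\to0$ in probability for every finite $B\subset\mathbb{N}_0$. This RDS has a weak attractor, unique up to $\mathbb{P}$-a.s. equality. *)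

theory Defs
  imports "HOL-Probability.Probability"
begin

type_synonym noise = "int \<Rightarrow> real"

definition noiseP :: "noise measure" where
  "noiseP = PiM UNIV (\<lambda>_::int. restrict_space lborel {0..1::real})"

definition shift :: "noise \<Rightarrow> noise" where
  "shift q = (\<lambda>n. q (n + 1))"

text \<open>One step of the birth-death chain (state space N0; natural-number
  subtraction, the case x = 0, q_0 >= 1 being a null event).\<close>
definition bd_step :: "real \<Rightarrow> real \<Rightarrow> noise \<Rightarrow> nat \<Rightarrow> nat" where
  "bd_step g1 g2 q x = (if q 0 < g1 / (g1 + g2 * real x) then x + 1 else x - 1)"

primrec bd_cocycle :: "real \<Rightarrow> real \<Rightarrow> nat \<Rightarrow> noise \<Rightarrow> nat \<Rightarrow> nat" where
  "bd_cocycle g1 g2 0 q x = x"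
| "bd_cocycle g1 g2 (Suc n) q x = bd_step g1 g2 ((shift ^^ n) q) (bd_cocycle g1 g2 n q x)"

definition pdist :: "nat \<Rightarrow> nat set \<Rightarrow> real" where
  "pdist x B = infdist (real x) (real ` B)"

definition hdist :: "nat set \<Rightarrow> nat set \<Rightarrow> real" where
  "hdist A B = (if A = {} then 0 else Sup ((\<lambda>x. pdist x B) ` A))"

definition weak_attractor :: "real \<Rightarrow> real \<Rightarrow> (noise \<Rightarrow> nat set) \<Rightarrow> bool" where
  "weak_attractor g1 g2 A \<longleftrightarrow>
     (\<forall>x. (\<lambda>q. pdist x (A q)) \<in> borel_measurable noiseP)
   \<and> (\<forall>q\<in>space noiseP. A q \<noteq> {} \<and> finite (A q))
   \<and> (AE q in noiseP. \<forall>n. bd_cocycle g1 g2 n q ` A q = A ((shift ^^ n) q))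
   \<and> (\<forall>B. finite B \<longrightarrow> (\<forall>e>0.
        (\<lambda>n. emeasure noiseP {q \<in> space noiseP.
              hdist (bd_cocycle g1 g2 n q ` B) (A ((shift ^^ n) q)) > e})
        \<longlonglongrightarrow> 0))"

end

theory Submission
  imports Defs
begin

text \<open>
  Parity: almost surely all noise values are below 1, and then every step of the chain changes
  parity (from state 0 it always moves up). Hence \<open>\<phi>\<^sup>n 0\<close> and \<open>\<phi>\<^sup>n 1\<close> have opposite
  parities; both are attracted into \<open>A(\<theta>\<^sup>n q)\<close>, so by shift invariance \<open>A q\<close> meets both parity
  classes almost surely.

  At most two points: the event that \<open>{0..L}\<close> still has three distinct images under \<open>\<phi>\<^sup>n\<close>
  decreases in \<open>n\<close>. If all these images are at most \<open>K\<close>, then \<open>K\<close> consecutive noise values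
  above \<open>\<gamma>\<^sub>1/(\<gamma>\<^sub>1+\<gamma>\<^sub>2)\<close>, an event of probability \<open>(\<gamma>\<^sub>2/(\<gamma>\<^sub>1+\<gamma>\<^sub>2))\<^sup>K\<close>
  independent of the past, push all of them into \<open>{0,1}\<close>. Attraction and tightness of \<open>A\<close> make
  the images bounded by \<open>K\<close> with high probability, so the limit \<open>l\<close> of the probabilities satisfies
  \<open>l \<le> P(max A > K)\<close> for every \<open>K\<close>, i.e. \<open>l = 0\<close>. Since \<open>A(\<theta>\<^sup>n q) = \<phi>\<^sup>n(A q)\<close>, three points
  of \<open>A q \<subseteq> {0..L}\<close> would keep \<open>{0..L}\<close> in that event forever.
\<close>

section \<open>The noise space\<close>

abbreviation uniform01 :: "real measure" where
  "uniform01 \<equiv> restrict_space lborel {0..1}"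

lemma prob_space_uniform01: "prob_space uniform01"
  by (rule prob_space_restrict_space) auto

lemma noiseP_eq_PiM: "noiseP = PiM UNIV (\<lambda>_. uniform01)"
  by (simp add: noiseP_def)

interpretation noiseP: prob_space noiseP
  unfolding noiseP_eq_PiM by (rule prob_space_PiM) (simp add: prob_space_uniform01)

lemma space_noiseP: "space noiseP = {q. \<forall>k. q k \<in> {0..1}}"
  by (auto simp: noiseP_def space_PiM PiE_def Pi_def space_restrict_space)

lemma measurable_noise_coordinate:
  "k \<in> I \<Longrightarrow> (\<lambda>q. q k) \<in> borel_measurable (PiM I (\<lambda>_. uniform01))"
  by (rule measurable_compose[OF measurable_component_singleton]) (auto intro: measurable_restrict_space1)

lemma measurable_noiseP_coordinate [measurable]: "(\<lambda>q. q k) \<in> borel_measurable noiseP"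
  unfolding noiseP_eq_PiM by (rule measurable_noise_coordinate) simp

lemma funpow_shift_apply: "(shift ^^ n) q k = q (k + int n)"
  by (induction n arbitrary: k) (auto simp: shift_def algebra_simps)

lemma measurable_noise_shift: "shift \<in> measurable noiseP noiseP"
  unfolding noiseP_eq_PiM shift_def
  by (rule measurable_PiM_single') (auto simp: space_PiM)

lemma distr_noise_shift: "distr noiseP noiseP shift = noiseP"
proof -
  have "shift = (\<lambda>q. \<lambda>k\<in>UNIV. q (k + 1))"
    by (simp add: shift_def fun_eq_iff)
  moreover have "distr noiseP (PiM UNIV (\<lambda>_. uniform01)) (\<lambda>q. \<lambda>k\<in>UNIV. q (k + 1)) = noiseP"
    unfolding noiseP_eq_PiM
    by (rule distr_PiM_reindex[where M = "\<lambda>_. uniform01", simplified])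
       (auto simp: prob_space_uniform01)
  ultimately show ?thesis
    by (simp add: noiseP_eq_PiM)
qed

lemma measurable_funpow_noise_shift [measurable]: "shift ^^ n \<in> measurable noiseP noiseP"
  by (induction n) (auto intro: measurable_compose[OF _ measurable_noise_shift])

lemma distr_funpow_noise_shift: "distr noiseP noiseP (shift ^^ n) = noiseP"
proof (induction n)
  case (Suc n)
  have "distr noiseP noiseP (shift ^^ Suc n) = distr (distr noiseP noiseP (shift ^^ n)) noiseP shift"
    unfolding funpow.simps(2) by (rule distr_distr[symmetric]) (auto intro: measurable_noise_shift)
  also have "\<dots> = noiseP"
    unfolding Suc.IH by (rule distr_noise_shift)
  finally show ?case .
qed (simp add: distr_id2)

lemma prob_funpow_shift_pred:
  assumes "Measurable.pred noiseP P"
  shows "noiseP.prob {q \<in> space noiseP. P ((shift ^^ n) q)} = noiseP.prob {q \<in> space noiseP. P q}"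
proof -
  have "{q \<in> space noiseP. P ((shift ^^ n) q)} = (shift ^^ n) -` {q \<in> space noiseP. P q} \<inter> space noiseP"
    using measurable_space[OF measurable_funpow_noise_shift] by auto
  also have "noiseP.prob \<dots> = measure (distr noiseP noiseP (shift ^^ n)) {q \<in> space noiseP. P q}"
    using assms by (intro measure_distr[symmetric]) auto
  finally show ?thesis
    unfolding distr_funpow_noise_shift .
qed

lemma indep_vars_noise_coordinates: "noiseP.indep_vars (\<lambda>_. uniform01) (\<lambda>k q. q k) UNIV"
proof -
  have coordinate: "(\<lambda>q. q k) \<in> measurable noiseP uniform01" for k
    unfolding noiseP_eq_PiM by (rule measurable_component_singleton) simp
  have "distr noiseP uniform01 (\<lambda>q. q k) = uniform01" for k
    unfolding noiseP_eq_PiM by (rule distr_PiM_component) (auto simp: prob_space_uniform01)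
  moreover have "(\<lambda>q. \<lambda>k\<in>UNIV. q k) = (\<lambda>q. q)"
    by (simp add: fun_eq_iff)
  ultimately have "distr noiseP (PiM UNIV (\<lambda>_. uniform01)) (\<lambda>q. \<lambda>k\<in>UNIV. q k)
      = PiM UNIV (\<lambda>k. distr noiseP uniform01 (\<lambda>q. q k))"
    by (simp add: noiseP_eq_PiM[symmetric] restrict_UNIV distr_id)
  then show ?thesis
    by (subst noiseP.indep_vars_iff_distr_eq_PiM) (auto intro: coordinate)
qed

lemma AE_noise_less_1: "AE q in noiseP. \<forall>k. q k < 1"
proof (subst AE_all_countable, intro allI)
  fix k :: int
  have "AE x in uniform01. x < 1"
  proof (rule AE_I')
    show "{1} \<in> null_sets uniform01"
      by (subst null_sets_restrict_space) (auto intro: countable_imp_null_set_lborel)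
  qed (auto simp: space_restrict_space)
  then show "AE q in noiseP. q k < 1"
    unfolding noiseP_eq_PiM
    by (intro AE_PiM_component[where M = "\<lambda>_. uniform01"]) (auto simp: prob_space_uniform01)
qed

definition noise_above :: "real \<Rightarrow> nat \<Rightarrow> nat \<Rightarrow> noise set" where
  "noise_above p n m = {q \<in> space noiseP. \<forall>k\<in>{int n..<int n + int m}. p \<le> q k}"

lemma sets_noise_above [measurable]: "noise_above p n m \<in> sets noiseP"
  unfolding noise_above_def by measurable

lemma prob_noise_above:
  assumes "0 \<le> p" "p \<le> 1"
  shows "noiseP.prob (noise_above p n m) = (1 - p) ^ m"
proof (cases "m = 0")
  case False
  have "noise_above p n m = (\<Inter>k\<in>{int n..<int n + int m}. (\<lambda>q. q k) -` {p..1} \<inter> space noiseP)"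
    using False by (auto simp: noise_above_def space_noiseP)
  also have "noiseP.prob \<dots> = (\<Prod>k\<in>{int n..<int n + int m}. noiseP.prob ((\<lambda>q. q k) -` {p..1} \<inter> space noiseP))"
    using False assms by (intro noiseP.indep_varsD[OF indep_vars_noise_coordinates])
      (auto simp: sets_restrict_space_iff)
  also have "\<dots> = (\<Prod>k\<in>{int n..<int n + int m}. 1 - p)"
  proof (intro prod.cong refl)
    fix k :: int
    have "noiseP.prob ((\<lambda>q. q k) -` {p..1} \<inter> space noiseP) = measure (distr noiseP uniform01 (\<lambda>q. q k)) {p..1}"
      using assms by (intro measure_distr[symmetric]) (auto simp: noiseP_eq_PiM sets_restrict_space_iff)
    also have "\<dots> = measure uniform01 {p..1}"
      unfolding noiseP_eq_PiM by (subst distr_PiM_component) (auto simp: prob_space_uniform01)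
    also have "\<dots> = 1 - p"
      using assms by (subst measure_restrict_space) auto
    finally show "noiseP.prob ((\<lambda>q. q k) -` {p..1} \<inter> space noiseP) = 1 - p" .
  qed
  finally show ?thesis
    by simp
qed (simp add: noise_above_def noiseP.prob_space)

lemma prob_past_Int_noise_above:
  assumes past_measurable: "Measurable.pred (PiM {0..<int n} (\<lambda>_. uniform01)) P"
    and past_only: "\<And>q. P (restrict q {0..<int n}) = P q"
    and p: "0 \<le> p" "p \<le> 1"
  shows "noiseP.prob ({q \<in> space noiseP. P q} \<inter> noise_above p n m)
    = noiseP.prob {q \<in> space noiseP. P q} * (1 - p) ^ m"
proof -
  let ?past = "{0..<int n}" and ?future = "{int n..<int n + int m}"
  let ?G = "{r \<in> space (PiM ?past (\<lambda>_. uniform01)). P r}"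
  let ?F = "PiE ?future (\<lambda>_. {p..1})"
  have indep: "noiseP.indep_var (PiM ?past (\<lambda>_. uniform01)) (\<lambda>q. restrict q ?past)
      (PiM ?future (\<lambda>_. uniform01)) (\<lambda>q. restrict q ?future)"
    using noiseP.indep_var_restrict[OF indep_vars_noise_coordinates, of ?past ?future] by auto
  have G: "?G \<in> sets (PiM ?past (\<lambda>_. uniform01))"
    using past_measurable by simp
  have F: "?F \<in> sets (PiM ?future (\<lambda>_. uniform01))"
    using p by (intro sets_PiM_I_finite) (auto simp: sets_restrict_space)
  have past_event: "(\<lambda>q. restrict q ?past) -` ?G \<inter> space noiseP = {q \<in> space noiseP. P q}"
    using past_only by (auto simp: space_noiseP space_PiM space_restrict_space)
  have future_event: "(\<lambda>q. restrict q ?future) -` ?F \<inter> space noiseP = noise_above p n m"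
    by (auto simp: noise_above_def space_noiseP Pi_iff)
  have "(\<lambda>q. (restrict q ?past, restrict q ?future)) -` (?G \<times> ?F) \<inter> space noiseP
      = {q \<in> space noiseP. P q} \<inter> noise_above p n m"
    using past_event future_event by blast
  then show ?thesis
    using noiseP.indep_varD[OF indep G F] prob_noise_above[OF p, of n m]
    unfolding past_event future_event by simp
qed

section \<open>The birth-death cocycle\<close>

lemma bd_cocycle_add:
  "bd_cocycle g1 g2 (n + m) q = bd_cocycle g1 g2 m ((shift ^^ n) q) \<circ> bd_cocycle g1 g2 n q"
proof (induction m)
  case (Suc m)
  have shift_add: "(shift ^^ (n + m)) q = (shift ^^ m) ((shift ^^ n) q)"
    by (simp only: add.commute[of n m] funpow_add o_apply)
  show ?case
    using Suc.IH by (simp add: fun_eq_iff shift_add)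
qed (simp add: fun_eq_iff)

lemma bd_cocycle_restrict:
  "(\<And>k. k < n \<Longrightarrow> int k \<in> I) \<Longrightarrow> bd_cocycle g1 g2 n (restrict q I) = bd_cocycle g1 g2 n q"
  by (induction n) (auto simp: bd_step_def funpow_shift_apply fun_eq_iff)

lemma measurable_bd_cocycle:
  assumes "\<And>k. k < n \<Longrightarrow> int k \<in> I"
  shows "(\<lambda>q. bd_cocycle g1 g2 n q x) \<in> measurable (PiM I (\<lambda>_. uniform01)) (count_space UNIV)"
  using assms
proof (induction n)
  case (Suc n)
  then have IH: "(\<lambda>q. bd_cocycle g1 g2 n q x) \<in> measurable (PiM I (\<lambda>_. uniform01)) (count_space UNIV)"
    by simp
  have "(\<lambda>q. real (bd_cocycle g1 g2 n q x)) \<in> borel_measurable (PiM I (\<lambda>_. uniform01))"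
    using IH by (rule measurable_compose) simp
  moreover have "(\<lambda>q. q (int n)) \<in> borel_measurable (PiM I (\<lambda>_. uniform01))"
    using Suc.prems by (intro measurable_noise_coordinate) simp
  ultimately have "Measurable.pred (PiM I (\<lambda>_. uniform01))
      (\<lambda>q. q (int n) < g1 / (g1 + g2 * real (bd_cocycle g1 g2 n q x)))"
    by measurable
  then show ?case
    unfolding bd_cocycle.simps bd_step_def funpow_shift_apply
    by (intro measurable_If measurable_compose[OF IH]) simp_all
qed simp

text \<open>At \<open>x = 0\<close> a noise value \<open>q 0 = 1\<close> would give the truncated step \<open>0 - 1 = 0\<close>.\<close>

lemma even_bd_step_iff:
  assumes "g1 \<noteq> 0" "q 0 < 1"
  shows "even (bd_step g1 g2 q x) \<longleftrightarrow> odd x"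
  using assms by (cases x) (auto simp: bd_step_def)

lemma even_bd_cocycle_iff:
  assumes "g1 \<noteq> 0" "\<And>k. k < n \<Longrightarrow> q (int k) < 1"
  shows "even (bd_cocycle g1 g2 n q x) \<longleftrightarrow> even (x + n)"
  using assms(2)
proof (induction n)
  case (Suc n)
  then show ?case
    using assms(1) by (simp add: even_bd_step_iff funpow_shift_apply)
qed simp

lemma bd_step_le_max:
  assumes "0 < g1" "0 \<le> g2" "g1 / (g1 + g2) \<le> q 0"
  shows "bd_step g1 g2 q x \<le> max (x - 1) 1"
proof (cases "x = 0")
  case False
  then have "g2 * 1 \<le> g2 * real x"
    using assms(2) by (intro mult_left_mono) auto
  then have "g1 / (g1 + g2 * real x) \<le> g1 / (g1 + g2)"
    using assms(1,2) by (intro divide_left_mono mult_pos_pos add_pos_nonneg) auto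
  with assms(3) show ?thesis
    by (simp add: bd_step_def)
qed (simp add: bd_step_def)

lemma bd_cocycle_le_max:
  assumes "0 < g1" "0 \<le> g2" "\<And>j. j < m \<Longrightarrow> g1 / (g1 + g2) \<le> q (int (n + j))"
  shows "bd_cocycle g1 g2 (n + m) q x \<le> max (bd_cocycle g1 g2 n q x - m) 1"
  using assms(3)
proof (induction m)
  case (Suc m)
  have "g1 / (g1 + g2) \<le> (shift ^^ (n + m)) q 0"
    using Suc.prems[of m] by (simp add: funpow_shift_apply)
  then have "bd_cocycle g1 g2 (n + Suc m) q x \<le> max (bd_cocycle g1 g2 (n + m) q x - 1) 1"
    using bd_step_le_max[OF assms(1,2)] by simp
  with Suc show ?case
    by simp
qed simp

lemma measurable_bd_cocycle_noiseP [measurable]: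
  "(\<lambda>q. bd_cocycle g1 g2 n q x) \<in> measurable noiseP (count_space UNIV)"
  unfolding noiseP_eq_PiM by (rule measurable_bd_cocycle) simp

section \<open>Coalescence of images\<close>

lemma two_less_card_iff:
  assumes "finite S"
  shows "2 < card S \<longleftrightarrow> (\<exists>x\<in>S. \<exists>y\<in>S. \<exists>z\<in>S. x \<noteq> y \<and> x \<noteq> z \<and> y \<noteq> z)"
proof
  assume "2 < card S"
  then have "3 \<le> card S"
    by simp
  then obtain T where "T \<subseteq> S" "card T = 3"
    by (rule obtain_subset_with_card_n)
  then obtain x y z where "{x, y, z} \<subseteq> S" "x \<noteq> y" "y \<noteq> z" "x \<noteq> z"
    by (metis card_3_iff)
  then show "\<exists>x\<in>S. \<exists>y\<in>S. \<exists>z\<in>S. x \<noteq> y \<and> x \<noteq> z \<and> y \<noteq> z"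
    by blast
next
  assume "\<exists>x\<in>S. \<exists>y\<in>S. \<exists>z\<in>S. x \<noteq> y \<and> x \<noteq> z \<and> y \<noteq> z"
  then obtain x y z where "{x, y, z} \<subseteq> S" "x \<noteq> y" "y \<noteq> z" "x \<noteq> z"
    by blast
  then have "card {x, y, z} \<le> card S"
    by (intro card_mono assms)
  with \<open>x \<noteq> y\<close> \<open>y \<noteq> z\<close> \<open>x \<noteq> z\<close> show "2 < card S"
    by simp
qed

lemma pred_two_less_card_image:
  fixes f :: "'a \<Rightarrow> 'b \<Rightarrow> 'c::countable"
  assumes "finite S" "\<And>x. x \<in> S \<Longrightarrow> (\<lambda>q. f q x) \<in> measurable M (count_space UNIV)"
  shows "Measurable.pred M (\<lambda>q. 2 < card (f q ` S))"
proof -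
  have [measurable]: "Measurable.pred M (\<lambda>q. f q x = f q y)" if "x \<in> S" "y \<in> S" for x y
  proof -
    have "Measurable.pred M (\<lambda>q. \<exists>v. f q x = v \<and> f q y = v)"
      using assms(2) that by measurable
    moreover have "(\<lambda>q. \<exists>v. f q x = v \<and> f q y = v) = (\<lambda>q. f q x = f q y)"
      by auto
    ultimately show ?thesis
      by simp
  qed
  have "Measurable.pred M (\<lambda>q. \<exists>x\<in>S. \<exists>y\<in>S. \<exists>z\<in>S. f q x \<noteq> f q y \<and> f q x \<noteq> f q z \<and> f q y \<noteq> f q z)"
    using assms(1) by (measurable, auto intro: countable_finite)
  then show ?thesis
    using assms(1) by (simp add: two_less_card_iff)
qed

definition many_images :: "real \<Rightarrow> real \<Rightarrow> nat \<Rightarrow> nat \<Rightarrow> noise set" where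
  "many_images g1 g2 L n = {q \<in> space noiseP. 2 < card (bd_cocycle g1 g2 n q ` {..L})}"

lemma sets_many_images [measurable]: "many_images g1 g2 L n \<in> sets noiseP"
  unfolding many_images_def by (intro predE pred_two_less_card_image) simp_all

lemma many_images_antimono:
  assumes "m \<le> n"
  shows "many_images g1 g2 L n \<subseteq> many_images g1 g2 L m"
proof
  fix q assume q: "q \<in> many_images g1 g2 L n"
  obtain k where n: "n = m + k"
    using assms le_Suc_ex by blast
  have "bd_cocycle g1 g2 n q ` {..L} = bd_cocycle g1 g2 k ((shift ^^ m) q) ` bd_cocycle g1 g2 m q ` {..L}"
    by (simp add: n bd_cocycle_add image_comp)
  then have "card (bd_cocycle g1 g2 n q ` {..L}) \<le> card (bd_cocycle g1 g2 m q ` {..L})"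
    by (simp add: card_image_le)
  with q show "q \<in> many_images g1 g2 L m"
    by (auto simp: many_images_def)
qed

lemma bd_cocycle_image_le_1:
  assumes "0 < g1" "0 \<le> g2" "q \<in> noise_above (g1 / (g1 + g2)) n K"
    and "\<And>x. x \<le> L \<Longrightarrow> bd_cocycle g1 g2 n q x \<le> K"
  shows "bd_cocycle g1 g2 (n + K) q ` {..L} \<subseteq> {..1}"
proof clarify
  fix x assume "x \<le> L"
  have "\<And>j. j < K \<Longrightarrow> g1 / (g1 + g2) \<le> q (int (n + j))"
    using assms(3) by (auto simp: noise_above_def)
  then have "bd_cocycle g1 g2 (n + K) q x \<le> max (bd_cocycle g1 g2 n q x - K) 1"
    by (rule bd_cocycle_le_max[OF assms(1,2)])
  with assms(4)[OF \<open>x \<le> L\<close>] show "bd_cocycle g1 g2 (n + K) q x \<le> 1"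
    by simp
qed

lemma prob_many_images_add_le:
  assumes g: "0 < g1" "0 \<le> g2"
  shows "noiseP.prob (many_images g1 g2 L (n + K)) \<le> noiseP.prob (many_images g1 g2 L n)
    - (1 - g1 / (g1 + g2)) ^ K * noiseP.prob (many_images g1 g2 L n \<inter> {q \<in> space noiseP. \<forall>x\<le>L. bd_cocycle g1 g2 n q x \<le> K})"
proof -
  let ?p = "g1 / (g1 + g2)"
  define P where "P q \<longleftrightarrow> 2 < card (bd_cocycle g1 g2 n q ` {..L}) \<and> (\<forall>x\<le>L. bd_cocycle g1 g2 n q x \<le> K)" for q
  let ?E = "{q \<in> space noiseP. P q}"
  have p: "0 \<le> ?p" "?p \<le> 1"
    using g by auto
  have "Measurable.pred (PiM {0..<int n} (\<lambda>_. uniform01)) P"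
  proof -
    have [measurable]: "(\<lambda>q. bd_cocycle g1 g2 n q x) \<in> measurable (PiM {0..<int n} (\<lambda>_. uniform01)) (count_space UNIV)" for x
      by (rule measurable_bd_cocycle) simp
    have [measurable]: "Measurable.pred (PiM {0..<int n} (\<lambda>_. uniform01)) (\<lambda>q. 2 < card (bd_cocycle g1 g2 n q ` {..L}))"
      by (rule pred_two_less_card_image) (simp, measurable)
    show ?thesis
      unfolding P_def by measurable
  qed
  moreover have "P (restrict q {0..<int n}) = P q" for q
    by (simp add: P_def bd_cocycle_restrict)
  ultimately have indep: "noiseP.prob (?E \<inter> noise_above ?p n K) = noiseP.prob ?E * (1 - ?p) ^ K"
    using p by (rule prob_past_Int_noise_above)
  have E_sets: "?E \<in> sets noiseP"
  proof -
    have [measurable]: "Measurable.pred noiseP (\<lambda>q. 2 < card (bd_cocycle g1 g2 n q ` {..L}))"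
      by (rule pred_two_less_card_image) (simp, measurable)
    show ?thesis
      unfolding P_def by measurable
  qed
  have "?E \<inter> noise_above ?p n K \<inter> many_images g1 g2 L (n + K) = {}"
  proof -
    have "card (bd_cocycle g1 g2 (n + K) q ` {..L}) \<le> 2" if "q \<in> ?E \<inter> noise_above ?p n K" for q
    proof -
      have "bd_cocycle g1 g2 (n + K) q ` {..L} \<subseteq> {..1}"
        using that by (intro bd_cocycle_image_le_1[OF g]) (auto simp: P_def)
      then have "card (bd_cocycle g1 g2 (n + K) q ` {..L}) \<le> card {..1::nat}"
        by (intro card_mono) auto
      then show ?thesis
        by simp
    qed
    then show ?thesis
      by (force simp: many_images_def)
  qed
  moreover have "?E \<subseteq> many_images g1 g2 L n"
    by (auto simp: P_def many_images_def)
  ultimately have "many_images g1 g2 L (n + K) \<subseteq> many_images g1 g2 L n - (?E \<inter> noise_above ?p n K)"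
    using many_images_antimono[of n "n + K" g1 g2 L] by auto
  then have "noiseP.prob (many_images g1 g2 L (n + K)) \<le> noiseP.prob (many_images g1 g2 L n - (?E \<inter> noise_above ?p n K))"
    using E_sets by (intro noiseP.finite_measure_mono) auto
  also have "\<dots> = noiseP.prob (many_images g1 g2 L n) - noiseP.prob ?E * (1 - ?p) ^ K"
    using \<open>?E \<subseteq> many_images g1 g2 L n\<close> indep E_sets by (subst noiseP.finite_measure_Diff) auto
  also have "?E = many_images g1 g2 L n \<inter> {q \<in> space noiseP. \<forall>x\<le>L. bd_cocycle g1 g2 n q x \<le> K}"
    by (auto simp: P_def many_images_def)
  finally show ?thesis
    by (simp add: mult.commute)
qed

section \<open>The weak attractor\<close>

lemma pdist_ge_1:
  assumes "finite B" "B \<noteq> {}" "x \<notin> B"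
  shows "1 \<le> pdist x B"
proof -
  obtain y where y: "y \<in> B" "pdist x B = dist (real x) (real y)"
    using infdist_attains_inf[of "real ` B" "real x"] assms(1,2)
    by (auto simp: pdist_def finite_imp_closed)
  moreover have "x \<noteq> y"
    using y(1) assms(3) by blast
  ultimately show ?thesis
    by (cases x y rule: linorder_cases) (auto simp: dist_real_def)
qed

lemma hdist_image_gt_iff:
  assumes "finite B" "B \<noteq> {}"
  shows "e < hdist (f ` B) C \<longleftrightarrow> (\<exists>x\<in>B. e < pdist (f x) C)"
  using assms by (simp add: hdist_def cSup_eq_Max Max_gr_iff)

lemma (in prob_space) AE_of_prob_le_tendsto_0:
  assumes "Measurable.pred M P" "\<And>n. prob {x \<in> space M. \<not> P x} \<le> f n" "f \<longlonglongrightarrow> 0"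
  shows "AE x in M. P x"
proof -
  have "prob {x \<in> space M. \<not> P x} \<le> 0"
    using assms(2,3) by (intro LIMSEQ_le_const) auto
  then have "emeasure M {x \<in> space M. \<not> P x} = 0"
    by (simp add: emeasure_eq_measure measure_le_0_iff)
  then show ?thesis
    using assms(1) by (subst AE_iff_measurable[OF _ refl]) auto
qed

locale bd_weak_attractor =
  fixes g1 g2 :: real and A :: "noise \<Rightarrow> nat set"
  assumes weak_attractor: "weak_attractor g1 g2 A"
begin

lemma finite_attractor: "q \<in> space noiseP \<Longrightarrow> finite (A q)"
  and attractor_nonempty: "q \<in> space noiseP \<Longrightarrow> A q \<noteq> {}"
  using weak_attractor by (auto simp: weak_attractor_def)

lemma pred_mem_attractor [measurable]: "Measurable.pred noiseP (\<lambda>q. x \<in> A q)"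
proof -
  have "{q \<in> space noiseP. x \<in> A q} = {q \<in> space noiseP. pdist x (A q) < 1}"
    using finite_attractor attractor_nonempty pdist_ge_1 by (fastforce simp: pdist_def)
  moreover have "(\<lambda>q. pdist x (A q)) \<in> borel_measurable noiseP"
    using weak_attractor by (simp add: weak_attractor_def)
  ultimately show ?thesis
    unfolding pred_def by simp
qed

lemma pred_Bex_attractor [measurable]: "Measurable.pred noiseP (\<lambda>q. \<exists>x\<in>A q. P x)"
proof -
  have "Measurable.pred noiseP (\<lambda>q. \<exists>x. P x \<and> x \<in> A q)"
    by measurable
  then show ?thesis
    by (simp add: Bex_def conj_commute)
qed

lemma attractor_tail_tendsto_0:
  "(\<lambda>K. noiseP.prob {q \<in> space noiseP. \<exists>x\<in>A q. K < x}) \<longlonglongrightarrow> 0"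
proof -
  have "(\<lambda>K. noiseP.prob {q \<in> space noiseP. \<exists>x\<in>A q. K < x})
      \<longlonglongrightarrow> noiseP.prob (\<Inter>K. {q \<in> space noiseP. \<exists>x\<in>A q. K < x})"
    by (rule noiseP.finite_Lim_measure_decseq) (auto simp: decseq_def intro: le_less_trans)
  moreover have "(\<Inter>K. {q \<in> space noiseP. \<exists>x\<in>A q. K < x}) = {}"
  proof -
    have "\<exists>K. \<forall>x\<in>A q. x \<le> K" if "q \<in> space noiseP" for q
      using finite_attractor[OF that] finite_nat_set_iff_bounded_le by blast
    then show ?thesis
      by (fastforce simp: not_less[symmetric])
  qed
  ultimately show ?thesis
    by simp
qed

lemma attractor_miss_tendsto_0:
  assumes "finite B"
  shows "(\<lambda>n. noiseP.prob {q \<in> space noiseP. \<exists>x\<in>B. bd_cocycle g1 g2 n q x \<notin> A ((shift ^^ n) q)}) \<longlonglongrightarrow> 0"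
proof (cases "B = {}")
  case False
  let ?miss = "\<lambda>n. {q \<in> space noiseP. \<exists>x\<in>B. bd_cocycle g1 g2 n q x \<notin> A ((shift ^^ n) q)}"
  let ?far = "\<lambda>n. {q \<in> space noiseP. 1/2 < hdist (bd_cocycle g1 g2 n q ` B) (A ((shift ^^ n) q))}"
  have convergence: "\<And>e. 0 < e \<Longrightarrow> (\<lambda>n. emeasure noiseP
      {q \<in> space noiseP. e < hdist (bd_cocycle g1 g2 n q ` B) (A ((shift ^^ n) q))}) \<longlonglongrightarrow> 0"
    using weak_attractor assms unfolding weak_attractor_def by blast
  have "(\<lambda>n. emeasure noiseP (?far n)) \<longlonglongrightarrow> 0"
    using convergence[of "1/2"] by simp
  then have far: "(\<lambda>n. noiseP.prob (?far n)) \<longlonglongrightarrow> 0"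
    by (simp add: noiseP.emeasure_eq_measure tendsto_ennreal_iff[symmetric])
  have "?miss n \<subseteq> ?far n" for n
  proof
    fix q assume "q \<in> ?miss n"
    then obtain x where q: "q \<in> space noiseP" and x: "x \<in> B" "bd_cocycle g1 g2 n q x \<notin> A ((shift ^^ n) q)"
      by auto
    have "(shift ^^ n) q \<in> space noiseP"
      using q measurable_space[OF measurable_funpow_noise_shift] by blast
    then have "1 \<le> pdist (bd_cocycle g1 g2 n q x) (A ((shift ^^ n) q))"
      using x finite_attractor attractor_nonempty by (intro pdist_ge_1) auto
    then show "q \<in> ?far n"
      using q x hdist_image_gt_iff[OF assms False] by fastforce
  qed
  moreover have "?far n \<in> sets noiseP" for n
  proof -
    have [measurable]: "(\<lambda>q. pdist y (A ((shift ^^ n) q))) \<in> borel_measurable noiseP" for y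
      using weak_attractor by (intro measurable_compose[OF measurable_funpow_noise_shift]) (simp add: weak_attractor_def)
    have "?far n = {q \<in> space noiseP. \<exists>x\<in>B. \<exists>y. bd_cocycle g1 g2 n q x = y \<and> 1/2 < pdist y (A ((shift ^^ n) q))}"
      unfolding hdist_image_gt_iff[OF assms False] by blast
    also have "\<dots> \<in> sets noiseP"
      using assms by measurable
    finally show ?thesis .
  qed
  ultimately show ?thesis
    by (intro tendsto_sandwich[OF _ _ tendsto_const far] always_eventually allI noiseP.finite_measure_mono) auto
qed simp

lemma AE_attractor_invariant: "AE q in noiseP. \<forall>n. bd_cocycle g1 g2 n q ` A q = A ((shift ^^ n) q)"
  using weak_attractor by (simp add: weak_attractor_def)

lemma pred_bd_cocycle_mem_attractor [measurable]:
  "Measurable.pred noiseP (\<lambda>q. bd_cocycle g1 g2 n q x \<in> A ((shift ^^ n) q))"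
proof -
  have [measurable]: "Measurable.pred noiseP (\<lambda>q. y \<in> A ((shift ^^ n) q))" for y
    by (rule measurable_compose[OF measurable_funpow_noise_shift pred_mem_attractor])
  have "Measurable.pred noiseP (\<lambda>q. \<exists>y. bd_cocycle g1 g2 n q x = y \<and> y \<in> A ((shift ^^ n) q))"
    by measurable
  then show ?thesis
    by simp
qed

lemma pred_two_less_card_attractor [measurable]: "Measurable.pred noiseP (\<lambda>q. 2 < card (A q))"
proof -
  have "Measurable.pred noiseP (\<lambda>q. \<exists>x\<in>A q. \<exists>y\<in>A q. \<exists>z\<in>A q. x \<noteq> y \<and> x \<noteq> z \<and> y \<noteq> z)"
    by (simp only: Bex_def) measurable
  moreover have "{q \<in> space noiseP. 2 < card (A q)}
      = {q \<in> space noiseP. \<exists>x\<in>A q. \<exists>y\<in>A q. \<exists>z\<in>A q. x \<noteq> y \<and> x \<noteq> z \<and> y \<noteq> z}"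
    using finite_attractor two_less_card_iff by blast
  ultimately show ?thesis
    by (simp add: pred_def)
qed

lemma prob_bd_cocycle_gt_le:
  "noiseP.prob {q \<in> space noiseP. \<exists>x\<le>L. K < bd_cocycle g1 g2 n q x}
    \<le> noiseP.prob {q \<in> space noiseP. \<exists>x\<in>{..L}. bd_cocycle g1 g2 n q x \<notin> A ((shift ^^ n) q)}
      + noiseP.prob {q \<in> space noiseP. \<exists>x\<in>A q. K < x}"
proof -
  let ?miss = "{q \<in> space noiseP. \<exists>x\<in>{..L}. bd_cocycle g1 g2 n q x \<notin> A ((shift ^^ n) q)}"
  let ?tail = "{q \<in> space noiseP. \<exists>x\<in>A ((shift ^^ n) q). K < x}"
  have [measurable]: "Measurable.pred noiseP (\<lambda>q. \<exists>x\<in>A ((shift ^^ n) q). K < x)"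
    by (rule measurable_compose[OF measurable_funpow_noise_shift pred_Bex_attractor])
  have "{q \<in> space noiseP. \<exists>x\<le>L. K < bd_cocycle g1 g2 n q x} \<subseteq> ?miss \<union> ?tail"
    by auto
  then have "noiseP.prob {q \<in> space noiseP. \<exists>x\<le>L. K < bd_cocycle g1 g2 n q x} \<le> noiseP.prob (?miss \<union> ?tail)"
    by (intro noiseP.finite_measure_mono) measurable
  also have "\<dots> \<le> noiseP.prob ?miss + noiseP.prob ?tail"
    by (intro measure_Un_le) measurable
  also have "noiseP.prob ?tail = noiseP.prob {q \<in> space noiseP. \<exists>x\<in>A q. K < x}"
    by (rule prob_funpow_shift_pred) measurable
  finally show ?thesis .
qed

lemma prob_many_images_decrement:
  assumes "0 < g1" "0 \<le> g2"
  shows "(1 - g1 / (g1 + g2)) ^ K * (noiseP.prob (many_images g1 g2 L n)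
      - (noiseP.prob {q \<in> space noiseP. \<exists>x\<in>{..L}. bd_cocycle g1 g2 n q x \<notin> A ((shift ^^ n) q)}
        + noiseP.prob {q \<in> space noiseP. \<exists>x\<in>A q. K < x}))
    \<le> noiseP.prob (many_images g1 g2 L n) - noiseP.prob (many_images g1 g2 L (n + K))"
proof -
  let ?bounded = "many_images g1 g2 L n \<inter> {q \<in> space noiseP. \<forall>x\<le>L. bd_cocycle g1 g2 n q x \<le> K}"
  let ?high = "{q \<in> space noiseP. \<exists>x\<le>L. K < bd_cocycle g1 g2 n q x}"
  have "many_images g1 g2 L n \<subseteq> ?bounded \<union> ?high"
    by (auto simp: many_images_def not_le)
  then have "noiseP.prob (many_images g1 g2 L n) \<le> noiseP.prob (?bounded \<union> ?high)"
    by (intro noiseP.finite_measure_mono) measurable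
  also have "\<dots> \<le> noiseP.prob ?bounded + noiseP.prob ?high"
    by (intro measure_Un_le) measurable
  finally have "noiseP.prob (many_images g1 g2 L n)
      - (noiseP.prob {q \<in> space noiseP. \<exists>x\<in>{..L}. bd_cocycle g1 g2 n q x \<notin> A ((shift ^^ n) q)}
        + noiseP.prob {q \<in> space noiseP. \<exists>x\<in>A q. K < x}) \<le> noiseP.prob ?bounded"
    using prob_bd_cocycle_gt_le[of L K n] by linarith
  moreover have "0 \<le> (1 - g1 / (g1 + g2)) ^ K"
    using assms by simp
  ultimately show ?thesis
    using prob_many_images_add_le[OF assms, of L n K] mult_left_mono by fastforce
qed

lemma prob_many_images_tendsto_0:
  assumes "0 < g1" "0 < g2"
  shows "(\<lambda>n. noiseP.prob (many_images g1 g2 L n)) \<longlonglongrightarrow> 0"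
proof -
  define a where "a n = noiseP.prob (many_images g1 g2 L n)" for n
  define miss where "miss n = noiseP.prob {q \<in> space noiseP. \<exists>x\<in>{..L}. bd_cocycle g1 g2 n q x \<notin> A ((shift ^^ n) q)}" for n
  define tail where "tail K = noiseP.prob {q \<in> space noiseP. \<exists>x\<in>A q. K < x}" for K
  have "decseq a"
    unfolding a_def decseq_def by (auto intro!: noiseP.finite_measure_mono many_images_antimono sets_many_images)
  then obtain l where lim: "a \<longlonglongrightarrow> l" and l_le: "\<And>n. l \<le> a n"
    by (rule decseq_convergent[where B = 0]) (auto simp: a_def)
  have "l \<le> tail K" for K
  proof -
    define c where "c = (1 - g1 / (g1 + g2)) ^ K"
    have "0 < c"
      using assms by (simp add: c_def)
    have "c * (l - (miss n + tail K)) \<le> a n - a (n + K)" for n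
    proof -
      have "c * (l - (miss n + tail K)) \<le> c * (a n - (miss n + tail K))"
        using \<open>0 < c\<close> l_le[of n] by (intro mult_left_mono) auto
      also have "\<dots> \<le> a n - a (n + K)"
        using prob_many_images_decrement[of K L n] assms unfolding a_def miss_def tail_def c_def by simp
      finally show ?thesis .
    qed
    moreover have "(\<lambda>n. c * (l - (miss n + tail K))) \<longlonglongrightarrow> c * (l - (0 + tail K))"
      unfolding miss_def by (intro tendsto_intros attractor_miss_tendsto_0) simp
    moreover have "(\<lambda>n. a n - a (n + K)) \<longlonglongrightarrow> l - l"
      by (intro tendsto_diff lim LIMSEQ_ignore_initial_segment)
    ultimately have "c * (l - tail K) \<le> 0"
      by (intro LIMSEQ_le) auto
    with \<open>0 < c\<close> show ?thesis
      by (simp add: mult_le_0_iff)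
  qed
  then have "l \<le> 0"
    using attractor_tail_tendsto_0 by (intro LIMSEQ_le_const) (auto simp: tail_def)
  moreover have "0 \<le> l"
    using lim by (rule LIMSEQ_le_const) (auto simp: a_def)
  ultimately have "l = 0"
    by simp
  with lim show ?thesis
    unfolding a_def by simp
qed

lemma prob_two_less_card_attractor_le:
  "noiseP.prob {q \<in> space noiseP. 2 < card (A q)}
    \<le> noiseP.prob (many_images g1 g2 L n) + noiseP.prob {q \<in> space noiseP. \<exists>x\<in>A q. L < x}"
proof -
  let ?shifted = "{q \<in> space noiseP. 2 < card (A ((shift ^^ n) q))}"
  let ?tail = "{q \<in> space noiseP. \<exists>x\<in>A q. L < x}"
  have "AE q in noiseP. q \<in> ?shifted \<longrightarrow> q \<in> many_images g1 g2 L n \<union> ?tail"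
    using AE_attractor_invariant
  proof eventually_elim
    case (elim q)
    show ?case
    proof (cases "A q \<subseteq> {..L}")
      case True
      then have "A ((shift ^^ n) q) \<subseteq> bd_cocycle g1 g2 n q ` {..L}"
        using elim by blast
      then have "card (A ((shift ^^ n) q)) \<le> card (bd_cocycle g1 g2 n q ` {..L})"
        by (intro card_mono) auto
      then show ?thesis
        by (auto simp: many_images_def)
    qed (auto simp: not_le)
  qed
  then have "noiseP.prob ?shifted \<le> noiseP.prob (many_images g1 g2 L n \<union> ?tail)"
    by (intro noiseP.finite_measure_mono_AE) measurable
  also have "\<dots> \<le> noiseP.prob (many_images g1 g2 L n) + noiseP.prob ?tail"
    by (intro measure_Un_le) measurable
  also have "noiseP.prob ?shifted = noiseP.prob {q \<in> space noiseP. 2 < card (A q)}"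
    by (rule prob_funpow_shift_pred) measurable
  finally show ?thesis .
qed

lemma AE_card_attractor_le_2:
  assumes "0 < g1" "0 < g2"
  shows "AE q in noiseP. card (A q) \<le> 2"
proof (rule noiseP.AE_of_prob_le_tendsto_0[OF _ _ attractor_tail_tendsto_0])
  show "Measurable.pred noiseP (\<lambda>q. card (A q) \<le> 2)"
    by (simp only: not_less[symmetric]) measurable
  fix L
  have "noiseP.prob {q \<in> space noiseP. 2 < card (A q)} \<le> 0 + noiseP.prob {q \<in> space noiseP. \<exists>x\<in>A q. L < x}"
    using prob_two_less_card_attractor_le[of L]
    by (intro LIMSEQ_le_const[OF tendsto_add[OF prob_many_images_tendsto_0[OF assms, of L] tendsto_const]]) simp
  then show "noiseP.prob {q \<in> space noiseP. \<not> card (A q) \<le> 2} \<le> noiseP.prob {q \<in> space noiseP. \<exists>x\<in>A q. L < x}"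
    by (simp add: not_le)
qed

lemma AE_attractor_even_odd:
  assumes "g1 \<noteq> 0"
  shows "AE q in noiseP. (\<exists>x\<in>A q. even x) \<and> (\<exists>x\<in>A q. odd x)"
proof (rule noiseP.AE_of_prob_le_tendsto_0[OF _ _ attractor_miss_tendsto_0[of "{0, 1}"]])
  fix n
  let ?shifted = "{q \<in> space noiseP. \<not> ((\<exists>x\<in>A ((shift ^^ n) q). even x) \<and> (\<exists>x\<in>A ((shift ^^ n) q). odd x))}"
  have "AE q in noiseP. q \<in> ?shifted \<longrightarrow>
      q \<in> {q \<in> space noiseP. \<exists>x\<in>{0, 1}. bd_cocycle g1 g2 n q x \<notin> A ((shift ^^ n) q)}"
    using AE_noise_less_1
  proof eventually_elim
    case (elim q)
    then have "even (bd_cocycle g1 g2 n q 0) \<longleftrightarrow> odd (bd_cocycle g1 g2 n q 1)"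
      using even_bd_cocycle_iff[OF assms] by simp
    then show ?case
      by auto
  qed
  then have "noiseP.prob ?shifted
      \<le> noiseP.prob {q \<in> space noiseP. \<exists>x\<in>{0, 1}. bd_cocycle g1 g2 n q x \<notin> A ((shift ^^ n) q)}"
    by (intro noiseP.finite_measure_mono_AE) measurable
  moreover have "noiseP.prob ?shifted
      = noiseP.prob {q \<in> space noiseP. \<not> ((\<exists>x\<in>A q. even x) \<and> (\<exists>x\<in>A q. odd x))}"
    by (rule prob_funpow_shift_pred) measurable
  ultimately show "noiseP.prob {q \<in> space noiseP. \<not> ((\<exists>x\<in>A q. even x) \<and> (\<exists>x\<in>A q. odd x))}
      \<le> noiseP.prob {q \<in> space noiseP. \<exists>x\<in>{0, 1}. bd_cocycle g1 g2 n q x \<notin> A ((shift ^^ n) q)}"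
    by simp
qed (intro pred_intros_logic pred_Bex_attractor, simp)

end

theorem proposition4p8:
  fixes g1 g2 :: real and A :: "noise \<Rightarrow> nat set"
  assumes "g1 > 0" and "g2 > 0"
    and "weak_attractor g1 g2 A"
  shows "AE q in noiseP. card (A q) = 2
           \<and> A q \<inter> {n. even n} \<noteq> {} \<and> A q \<inter> {n. odd n} \<noteq> {}"
proof -
  interpret bd_weak_attractor g1 g2 A
    by unfold_locales (rule assms(3))
  have "AE q in noiseP. finite (A q) \<and> card (A q) \<le> 2 \<and> (\<exists>x\<in>A q. even x) \<and> (\<exists>x\<in>A q. odd x)"
    using AE_space AE_card_attractor_le_2[OF assms(1,2)] AE_attractor_even_odd[OF less_imp_neq[OF assms(1), symmetric]]
    by eventually_elim (auto simp: finite_attractor)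
  then show ?thesis
  proof eventually_elim
    case (elim q)
    then obtain a b where ab: "a \<in> A q" "even a" "b \<in> A q" "odd b"
      by blast
    then have "card {a, b} = 2"
      by (cases "a = b") auto
    moreover have "card {a, b} \<le> card (A q)"
      using elim ab by (intro card_mono) auto
    ultimately have "card (A q) = 2"
      using elim by simp
    with ab show ?case
      by auto
  qed
qed

end
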